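(* Let $\mathcal{A}$ be a finite set of players and $\mathcal{R}$ a finite set of resources; each player $i$ has a finite strategy set $\Gamma_i$, each $\gamma_i\in\Gamma_i$ determining a set $\gamma_i^{\mathrm{cg}}\subseteq\mathcal{R}$. For $\gamma\in\Gamma=\prod_i\Gamma_i$ let $l_r(\gamma)=\sum_i\mathbf{1}[r\in\gamma_i^{\mathrm{cg}}]$, and let each $J_r$ be a polynomial with non-negative coefficients of degree at most $d$. Player costs are $J_i(\gamma)=\sum_{r\in\gamma_i^{\mathrm{cg}}}J_r(l_r(\gamma))+J_i^{\mathrm{per}}(\gamma_i)$ with $J_i^{\mathrm{per}}\ge0$ depending only on $\gamma_i$. Let $C=\sum_iJ_i$, $\Gamma_{\mathrm{NE}}$ the set of pure Nash equilibria, $\Gamma^\star=\arg\min_\Gamma C$, $\mathrm{PoA}=\max_{\Gamma_{\mathrm{NE}}}C/\min_\Gamma C$, and $\alpha^\star\ge0$ the largest constant with $J_i^{\mathrm{per}}(\gamma_i)\ge\alpha^\star\sum_{r\in\gamma_i^{\mathrm{cg}}}J_r(l_r(\gamma))$ for all $i$ and all $\gamma\in\Gamma_{\mathrm{NE}}\cup\Gamma^\star$. Let $\mathcal{P}_d$ denote the set of polynomials of degree at most $d$ with non-negative coefficients. Then $\mathrm{PoA}$ is at most $$\min_{\tilde\lambda\in\mathbb{R},\ \tilde\mu\in(0,1+\alpha^\star)}\ \frac{\tilde\lambda+\alpha^\star}{1-\tilde\mu+\alpha^\star}\quad\text{s.t.}\quad y\,J(x+1)\le\tilde\lambda\,y\,J(y)+\tilde\mu\,x\,J(x)\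 \ \forall x,y\in\mathbb{N}_0,\ J\in\mathcal{P}_d.$$
   Context: This is the congestion-game model of urban driving games (resources are space-time-proximity grid cells). A pure Nash equilibrium is a $\gamma$ with $J_i(\gamma)\le J_i(\gamma_i',\gamma_{-i})$ for all $i$ and $\gamma_i'\in\Gamma_i$. *)

theory Defs
  imports "HOL-Computational_Algebra.Polynomial" "HOL-Library.FuncSet"
begin

definition profiles :: "'p set \<Rightarrow> ('p \<Rightarrow> 's set) \<Rightarrow> ('p \<Rightarrow> 's) set" where
  "profiles A Gam = PiE A Gam"

definition load :: "'p set \<Rightarrow> ('p \<Rightarrow> 's \<Rightarrow> 'r set) \<Rightarrow> ('p \<Rightarrow> 's) \<Rightarrow> 'r \<Rightarrow> nat" where
  "load A cg g r = (\<Sum>i\<in>A. if r \<in> cg i (g i) then 1 else 0)"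

definition cong_cost :: "'p set \<Rightarrow> ('p \<Rightarrow> 's \<Rightarrow> 'r set) \<Rightarrow> ('r \<Rightarrow> real poly)
    \<Rightarrow> ('p \<Rightarrow> 's) \<Rightarrow> 'p \<Rightarrow> real" where
  "cong_cost A cg Jr g i = (\<Sum>r\<in>cg i (g i). poly (Jr r) (real (load A cg g r)))"

definition player_cost :: "'p set \<Rightarrow> ('p \<Rightarrow> 's \<Rightarrow> 'r set) \<Rightarrow> ('r \<Rightarrow> real poly)
    \<Rightarrow> ('p \<Rightarrow> 's \<Rightarrow> real) \<Rightarrow> ('p \<Rightarrow> 's) \<Rightarrow> 'p \<Rightarrow> real" where
  "player_cost A cg Jr Jper g i = cong_cost A cg Jr g i + Jper i (g i)"

definition social_cost :: "'p set \<Rightarrow> ('p \<Rightarrow> 's \<Rightarrow> 'r set) \<Rightarrow> ('r \<Rightarrow> real poly)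
    \<Rightarrow> ('p \<Rightarrow> 's \<Rightarrow> real) \<Rightarrow> ('p \<Rightarrow> 's) \<Rightarrow> real" where
  "social_cost A cg Jr Jper g = (\<Sum>i\<in>A. player_cost A cg Jr Jper g i)"

definition is_NE :: "'p set \<Rightarrow> ('p \<Rightarrow> 's set) \<Rightarrow> ('p \<Rightarrow> 's \<Rightarrow> 'r set) \<Rightarrow> ('r \<Rightarrow> real poly)
    \<Rightarrow> ('p \<Rightarrow> 's \<Rightarrow> real) \<Rightarrow> ('p \<Rightarrow> 's) \<Rightarrow> bool" where
  "is_NE A Gam cg Jr Jper g \<longleftrightarrow> g \<in> profiles A Gam \<and>
     (\<forall>i\<in>A. \<forall>s\<in>Gam i. player_cost A cg Jr Jper g i \<le> player_cost A cg Jr Jper (g(i := s)) i)"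

definition NE_set :: "'p set \<Rightarrow> ('p \<Rightarrow> 's set) \<Rightarrow> ('p \<Rightarrow> 's \<Rightarrow> 'r set) \<Rightarrow> ('r \<Rightarrow> real poly)
    \<Rightarrow> ('p \<Rightarrow> 's \<Rightarrow> real) \<Rightarrow> ('p \<Rightarrow> 's) set" where
  "NE_set A Gam cg Jr Jper = {g. is_NE A Gam cg Jr Jper g}"

definition opt_set :: "'p set \<Rightarrow> ('p \<Rightarrow> 's set) \<Rightarrow> ('p \<Rightarrow> 's \<Rightarrow> 'r set) \<Rightarrow> ('r \<Rightarrow> real poly)
    \<Rightarrow> ('p \<Rightarrow> 's \<Rightarrow> real) \<Rightarrow> ('p \<Rightarrow> 's) set" where
  "opt_set A Gam cg Jr Jper = {g \<in> profiles A Gam.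
     \<forall>h\<in>profiles A Gam. social_cost A cg Jr Jper g \<le> social_cost A cg Jr Jper h}"

definition PoA :: "'p set \<Rightarrow> ('p \<Rightarrow> 's set) \<Rightarrow> ('p \<Rightarrow> 's \<Rightarrow> 'r set) \<Rightarrow> ('r \<Rightarrow> real poly)
    \<Rightarrow> ('p \<Rightarrow> 's \<Rightarrow> real) \<Rightarrow> real" where
  "PoA A Gam cg Jr Jper =
     Max (social_cost A cg Jr Jper ` NE_set A Gam cg Jr Jper) /
     Min (social_cost A cg Jr Jper ` profiles A Gam)"

definition Pd :: "nat \<Rightarrow> real poly set" where
  "Pd d = {J. degree J \<le> d \<and> (\<forall>k. 0 \<le> coeff J k)}"

definition alpha_ok :: "'p set \<Rightarrow> ('p \<Rightarrow> 's set) \<Rightarrow> ('p \<Rightarrow> 's \<Rightarrow> 'r set) \<Rightarrow> ('r \<Rightarrow> real poly)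
    \<Rightarrow> ('p \<Rightarrow> 's \<Rightarrow> real) \<Rightarrow> real \<Rightarrow> bool" where
  "alpha_ok A Gam cg Jr Jper a \<longleftrightarrow> 0 \<le> a \<and>
     (\<forall>g \<in> NE_set A Gam cg Jr Jper \<union> opt_set A Gam cg Jr Jper. \<forall>i\<in>A.
        Jper i (g i) \<ge> a * cong_cost A cg Jr g i)"

end

theory Submission imports Defs begin

text \<open>Rosenthal's potential changes by exactly the deviating player's cost change, so its
  minimiser is a pure Nash equilibrium. For an equilibrium \<open>g\<close> and an optimum \<open>h\<close>, add up
  the equilibrium inequalities of all players deviating to \<open>h i\<close>: a deviator finds at most
  \<open>l\<^sub>r(g) + 1\<close> users on each resource \<open>r\<close>, so by smoothness
  \<open>C(g) \<le> \<Sum>\<^sub>r l\<^sub>r(h) J\<^sub>r(l\<^sub>r(g) + 1) + P(h) \<le> \<lambda> K(h) + \<mu> K(g) + P(h)\<close>,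
  where \<open>K\<close> and \<open>P\<close> are the total congestion and personal costs. Since \<open>P \<ge> \<alpha> K\<close> at \<open>g\<close>
  and \<open>h\<close>, this rearranges to \<open>(1 - \<mu> + \<alpha>) C(g) \<le> (\<lambda> + \<alpha>) C(h)\<close>.\<close>

lemma profiles_memD: "g \<in> profiles A Gam \<Longrightarrow> i \<in> A \<Longrightarrow> g i \<in> Gam i"
  unfolding profiles_def by auto

lemma profiles_fun_upd:
  "g \<in> profiles A Gam \<Longrightarrow> i \<in> A \<Longrightarrow> s \<in> Gam i \<Longrightarrow> g(i := s) \<in> profiles A Gam"
  unfolding profiles_def using PiE_fun_upd[of s Gam i g A] by (simp add: insert_absorb)

lemma finite_profiles:
  "finite A \<Longrightarrow> (\<And>i. i \<in> A \<Longrightarrow> finite (Gam i)) \<Longrightarrow> finite (profiles A Gam)"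
  unfolding profiles_def by (simp add: finite_PiE)

lemma profiles_nonempty: "(\<And>i. i \<in> A \<Longrightarrow> Gam i \<noteq> {}) \<Longrightarrow> profiles A Gam \<noteq> {}"
  unfolding profiles_def by (simp add: PiE_eq_empty_iff)

lemma load_remove:
  "finite A \<Longrightarrow> i \<in> A \<Longrightarrow>
    load A cg g r = load (A - {i}) cg g r + (if r \<in> cg i (g i) then 1 else 0)"
  unfolding load_def by (simp add: sum.remove add.commute)

lemma load_fun_upd_other: "i \<notin> B \<Longrightarrow> load B cg (g(i := s)) r = load B cg g r"
  unfolding load_def by (rule sum.cong) auto

lemma load_fun_upd_le:
  assumes "finite A" "i \<in> A"
  shows "load A cg (g(i := s)) r \<le> load A cg g r + 1"
  using load_remove[OF assms, of cg "g(i := s)" r] load_remove[OF assms, of cg g r]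
    load_fun_upd_other[of i "A - {i}" cg g s r]
  by simp

lemma poly_Pd_nonneg: "J \<in> Pd d \<Longrightarrow> 0 \<le> x \<Longrightarrow> 0 \<le> poly J (x::real)"
  unfolding Pd_def poly_altdef by (auto intro!: sum_nonneg)

lemma poly_Pd_mono: "J \<in> Pd d \<Longrightarrow> 0 \<le> x \<Longrightarrow> x \<le> y \<Longrightarrow> poly J (x::real) \<le> poly J y"
  unfolding Pd_def poly_altdef by (auto intro!: sum_mono mult_left_mono power_mono)

lemma one_in_Pd: "[:1:] \<in> Pd d"
  unfolding Pd_def by (simp add: coeff_pCons split: nat.splits)

lemma sum_resources_eq_sum_load:
  assumes "finite R" "(\<Union>i\<in>A. cg i (h i)) \<subseteq> R"
  shows "(\<Sum>i\<in>A. \<Sum>r\<in>cg i (h i). f r) = (\<Sum>r\<in>R. real (load A cg h r) * (f r :: real))"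
proof -
  have "(\<Sum>r\<in>cg i (h i). f r) = (\<Sum>r\<in>R. if r \<in> cg i (h i) then f r else 0)" if "i \<in> A" for i
  proof -
    have "cg i (h i) \<subseteq> R" using assms(2) that by blast
    then show ?thesis
      using assms(1) by (simp add: sum.inter_restrict[symmetric] Int_absorb1 inf.absorb_iff2)
  qed
  then have "(\<Sum>i\<in>A. \<Sum>r\<in>cg i (h i). f r) = (\<Sum>i\<in>A. \<Sum>r\<in>R. if r \<in> cg i (h i) then f r else 0)"
    by (rule sum.cong[OF refl])
  also have "\<dots> = (\<Sum>r\<in>R. \<Sum>i\<in>A. if r \<in> cg i (h i) then f r else 0)"
    by (rule sum.swap)
  also have "\<dots> = (\<Sum>r\<in>R. real (load A cg h r) * f r)"
    unfolding load_def by (auto simp: sum_distrib_right intro!: sum.cong)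
  finally show ?thesis .
qed

definition total_cong_cost :: "'p set \<Rightarrow> ('p \<Rightarrow> 's \<Rightarrow> 'r set) \<Rightarrow> ('r \<Rightarrow> real poly)
    \<Rightarrow> ('p \<Rightarrow> 's) \<Rightarrow> real" where
  "total_cong_cost A cg Jr g = (\<Sum>i\<in>A. cong_cost A cg Jr g i)"

definition total_per_cost :: "'p set \<Rightarrow> ('p \<Rightarrow> 's \<Rightarrow> real) \<Rightarrow> ('p \<Rightarrow> 's) \<Rightarrow> real" where
  "total_per_cost A Jper g = (\<Sum>i\<in>A. Jper i (g i))"

lemma social_cost_eq:
  "social_cost A cg Jr Jper g = total_cong_cost A cg Jr g + total_per_cost A Jper g"
  unfolding social_cost_def player_cost_def total_cong_cost_def total_per_cost_def
  by (simp add: sum.distrib)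

lemma total_cong_cost_eq_sum_load:
  assumes "finite R" "(\<Union>i\<in>A. cg i (g i)) \<subseteq> R"
  shows "total_cong_cost A cg Jr g =
    (\<Sum>r\<in>R. real (load A cg g r) * poly (Jr r) (real (load A cg g r)))"
  unfolding total_cong_cost_def cong_cost_def
  using sum_resources_eq_sum_load[where cg=cg and h=g, OF assms] .

lemma total_cong_cost_nonneg:
  assumes "finite R" "(\<Union>i\<in>A. cg i (g i)) \<subseteq> R" "\<And>r. r \<in> R \<Longrightarrow> Jr r \<in> Pd d"
  shows "0 \<le> total_cong_cost A cg Jr g"
proof -
  have "0 \<le> (\<Sum>r\<in>R. real (load A cg g r) * poly (Jr r) (real (load A cg g r)))"
    using assms(3) by (auto intro!: sum_nonneg mult_nonneg_nonneg poly_Pd_nonneg)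
  then show ?thesis
    using total_cong_cost_eq_sum_load[where cg=cg and g=g, OF assms(1,2)] by simp
qed

definition rosenthal_potential :: "'p set \<Rightarrow> 'r set \<Rightarrow> ('p \<Rightarrow> 's \<Rightarrow> 'r set)
    \<Rightarrow> ('r \<Rightarrow> real poly) \<Rightarrow> ('p \<Rightarrow> 's \<Rightarrow> real) \<Rightarrow> ('p \<Rightarrow> 's) \<Rightarrow> real" where
  "rosenthal_potential A R cg Jr Jper g =
     (\<Sum>r\<in>R. \<Sum>k<load A cg g r. poly (Jr r) (real k + 1)) + total_per_cost A Jper g"

lemma rosenthal_potential_remove:
  assumes "finite A" "finite R" "i \<in> A" "cg i (g i) \<subseteq> R"
  shows "rosenthal_potential A R cg Jr Jper g =
    (\<Sum>r\<in>R. \<Sum>k<load (A - {i}) cg g r. poly (Jr r) (real k + 1))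
    + total_per_cost (A - {i}) Jper g + player_cost A cg Jr Jper g i"
proof -
  have load_sum_remove: "(\<Sum>k<load A cg g r. poly (Jr r) (real k + 1)) =
      (\<Sum>k<load (A - {i}) cg g r. poly (Jr r) (real k + 1))
      + (if r \<in> cg i (g i) then poly (Jr r) (real (load A cg g r)) else 0)" for r
    using load_remove[OF assms(1,3), of cg g r] by (auto simp: add.commute)
  have "(\<Sum>r\<in>R. if r \<in> cg i (g i) then poly (Jr r) (real (load A cg g r)) else 0) =
      cong_cost A cg Jr g i"
    unfolding cong_cost_def using assms(2,4) by (simp add: sum.inter_restrict[symmetric] Int_absorb1)
  moreover have "total_per_cost A Jper g = Jper i (g i) + total_per_cost (A - {i}) Jper g"
    unfolding total_per_cost_def using assms(1,3) by (simp add: sum.remove)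
  ultimately show ?thesis
    unfolding rosenthal_potential_def player_cost_def by (simp add: load_sum_remove sum.distrib)
qed

lemma rosenthal_potential_fun_upd:
  assumes "finite A" "finite R" "i \<in> A" "cg i (g i) \<subseteq> R" "cg i s \<subseteq> R"
  shows "rosenthal_potential A R cg Jr Jper (g(i := s)) - rosenthal_potential A R cg Jr Jper g =
    player_cost A cg Jr Jper (g(i := s)) i - player_cost A cg Jr Jper g i"
proof -
  have "total_per_cost (A - {i}) Jper (g(i := s)) = total_per_cost (A - {i}) Jper g"
    unfolding total_per_cost_def by (rule sum.cong) auto
  then show ?thesis
    using rosenthal_potential_remove[OF assms(1-3), where g=g]
      rosenthal_potential_remove[OF assms(1-3), where g="g(i := s)"] assms(4,5)
    by (simp add: load_fun_upd_other)
qed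

lemma NE_set_nonempty:
  assumes "finite A" "finite R"
    and "\<And>i. i \<in> A \<Longrightarrow> finite (Gam i) \<and> Gam i \<noteq> {}"
    and "\<And>i s. i \<in> A \<Longrightarrow> s \<in> Gam i \<Longrightarrow> cg i s \<subseteq> R"
  shows "NE_set A Gam cg Jr Jper \<noteq> {}"
proof -
  let ?P = "profiles A Gam"
  let ?\<Phi> = "rosenthal_potential A R cg Jr Jper"
  have "finite ?P" by (rule finite_profiles) (use assms(1,3) in auto)
  moreover have "?P \<noteq> {}" by (rule profiles_nonempty) (use assms(3) in auto)
  ultimately have "Min (?\<Phi> ` ?P) \<in> ?\<Phi> ` ?P" by (intro Min_in) auto
  then obtain g where g: "g \<in> ?P" and "?\<Phi> g = Min (?\<Phi> ` ?P)" by auto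
  with \<open>finite ?P\<close> have g_min: "\<And>h. h \<in> ?P \<Longrightarrow> ?\<Phi> g \<le> ?\<Phi> h" by simp
  have "is_NE A Gam cg Jr Jper g"
    unfolding is_NE_def
  proof (intro conjI ballI g)
    fix i s assume i: "i \<in> A" and s: "s \<in> Gam i"
    have "?\<Phi> g \<le> ?\<Phi> (g(i := s))"
      using g_min profiles_fun_upd[OF g i s] .
    moreover have "?\<Phi> (g(i := s)) - ?\<Phi> g =
        player_cost A cg Jr Jper (g(i := s)) i - player_cost A cg Jr Jper g i"
      using assms(1,2) i assms(4)[OF i profiles_memD[OF g i]] assms(4)[OF i s]
      by (rule rosenthal_potential_fun_upd)
    ultimately show "player_cost A cg Jr Jper g i \<le> player_cost A cg Jr Jper (g(i := s)) i"
      by linarith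
  qed
  then show ?thesis unfolding NE_set_def by blast
qed

lemma cong_cost_deviation_le:
  assumes "finite A" "i \<in> A" "\<And>r. r \<in> cg i s \<Longrightarrow> Jr r \<in> Pd d"
  shows "cong_cost A cg Jr (g(i := s)) i \<le> (\<Sum>r\<in>cg i s. poly (Jr r) (real (load A cg g r) + 1))"
  unfolding cong_cost_def fun_upd_same
proof (rule sum_mono)
  fix r assume r: "r \<in> cg i s"
  have "real (load A cg (g(i := s)) r) \<le> real (load A cg g r) + 1"
    using load_fun_upd_le[OF assms(1,2), of cg g s r] by linarith
  then show "poly (Jr r) (real (load A cg (g(i := s)) r)) \<le> poly (Jr r) (real (load A cg g r) + 1)"
    using poly_Pd_mono[OF assms(3)[OF r]] by simp
qed

lemma NE_social_cost_le_smooth: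
  assumes "finite A" "finite R"
    and "\<And>i s. i \<in> A \<Longrightarrow> s \<in> Gam i \<Longrightarrow> cg i s \<subseteq> R"
    and "\<And>r. r \<in> R \<Longrightarrow> Jr r \<in> Pd d"
    and smooth: "\<And>r x y. r \<in> R \<Longrightarrow> real y * poly (Jr r) (real x + 1)
        \<le> lam * real y * poly (Jr r) (real y) + mu * real x * poly (Jr r) (real x)"
    and NE: "is_NE A Gam cg Jr Jper g" and h: "h \<in> profiles A Gam"
  shows "social_cost A cg Jr Jper g
    \<le> lam * total_cong_cost A cg Jr h + mu * total_cong_cost A cg Jr g + total_per_cost A Jper h"
proof -
  have g: "g \<in> profiles A Gam" using NE unfolding is_NE_def by simp
  have cg_g: "(\<Union>i\<in>A. cg i (g i)) \<subseteq> R" and cg_h: "(\<Union>i\<in>A. cg i (h i)) \<subseteq> R"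
    using assms(3) profiles_memD[OF g] profiles_memD[OF h] by auto
  have smooth_loads: "real (load A cg h r) * poly (Jr r) (real (load A cg g r) + 1)
      \<le> lam * (real (load A cg h r) * poly (Jr r) (real (load A cg h r)))
        + mu * (real (load A cg g r) * poly (Jr r) (real (load A cg g r)))" if "r \<in> R" for r
    using smooth[OF that, where x="load A cg g r" and y="load A cg h r"] by (simp add: mult.assoc)
  have "social_cost A cg Jr Jper g \<le> (\<Sum>i\<in>A. player_cost A cg Jr Jper (g(i := h i)) i)"
    unfolding social_cost_def using NE profiles_memD[OF h] unfolding is_NE_def
    by (intro sum_mono) auto
  also have "\<dots> \<le> (\<Sum>i\<in>A.
      (\<Sum>r\<in>cg i (h i). poly (Jr r) (real (load A cg g r) + 1)) + Jper i (h i))"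
  proof (rule sum_mono)
    fix i assume i: "i \<in> A"
    have "cong_cost A cg Jr (g(i := h i)) i \<le> (\<Sum>r\<in>cg i (h i). poly (Jr r) (real (load A cg g r) + 1))"
      using assms(1) i by (rule cong_cost_deviation_le) (use assms(4) cg_h i in blast)
    then show "player_cost A cg Jr Jper (g(i := h i)) i
        \<le> (\<Sum>r\<in>cg i (h i). poly (Jr r) (real (load A cg g r) + 1)) + Jper i (h i)"
      unfolding player_cost_def by simp
  qed
  also have "\<dots> = (\<Sum>r\<in>R. real (load A cg h r) * poly (Jr r) (real (load A cg g r) + 1))
      + total_per_cost A Jper h"
    unfolding total_per_cost_def sum.distrib
    using sum_resources_eq_sum_load[where cg=cg and h=h, OF assms(2) cg_h] by simp
  also have "\<dots> \<le> (\<Sum>r\<in>R. lam * (real (load A cg h r) * poly (Jr r) (real (load A cg h r)))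
      + mu * (real (load A cg g r) * poly (Jr r) (real (load A cg g r)))) + total_per_cost A Jper h"
    using smooth_loads by (intro add_right_mono sum_mono)
  also have "\<dots> = lam * total_cong_cost A cg Jr h + mu * total_cong_cost A cg Jr g
      + total_per_cost A Jper h"
    unfolding total_cong_cost_eq_sum_load[where cg=cg and g=g, OF assms(2) cg_g]
      total_cong_cost_eq_sum_load[where cg=cg and g=h, OF assms(2) cg_h]
    by (simp add: sum.distrib sum_distrib_left)
  finally show ?thesis .
qed

lemma smoothness_ratio_bound:
  fixes lam mu alpha Cg Pg Ch Ph :: real
  assumes "Cg + Pg \<le> lam * Ch + mu * Cg + Ph" "alpha * Cg \<le> Pg" "alpha * Ch \<le> Ph"
    and "0 \<le> mu" "1 \<le> lam" "0 \<le> 1 + alpha"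
  shows "(1 - mu + alpha) * (Cg + Pg) \<le> (lam + alpha) * (Ch + Ph)"
proof -
  have "(lam + alpha) * (Ch + Ph) - (1 - mu + alpha) * (Cg + Pg) =
      (1 + alpha) * (lam * Ch + mu * Cg + Ph - Cg - Pg) + mu * (Pg - alpha * Cg)
      + (lam - 1) * (Ph - alpha * Ch)"
    by (simp add: algebra_simps)
  moreover have "0 \<le> (1 + alpha) * (lam * Ch + mu * Cg + Ph - Cg - Pg)"
    "0 \<le> mu * (Pg - alpha * Cg)" "0 \<le> (lam - 1) * (Ph - alpha * Ch)"
    using assms by simp_all
  ultimately show ?thesis by linarith
qed

lemma alpha_ok_total_cost:
  assumes "alpha_ok A Gam cg Jr Jper a" "g \<in> NE_set A Gam cg Jr Jper \<union> opt_set A Gam cg Jr Jper"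
  shows "a * total_cong_cost A cg Jr g \<le> total_per_cost A Jper g"
  using assms unfolding alpha_ok_def total_cong_cost_def total_per_cost_def
  by (auto simp: sum_distrib_left intro!: sum_mono)

lemma social_cost_nonneg:
  assumes "finite R" "h \<in> profiles A Gam"
    and "\<And>i s. i \<in> A \<Longrightarrow> s \<in> Gam i \<Longrightarrow> cg i s \<subseteq> R"
    and "\<And>r. r \<in> R \<Longrightarrow> Jr r \<in> Pd d"
    and "\<And>i s. i \<in> A \<Longrightarrow> s \<in> Gam i \<Longrightarrow> 0 \<le> Jper i s"
  shows "0 \<le> social_cost A cg Jr Jper h"
proof -
  have "(\<Union>i\<in>A. cg i (h i)) \<subseteq> R" using assms(3) profiles_memD[OF assms(2)] by blast
  with assms(1,4) have "0 \<le> total_cong_cost A cg Jr h"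
    by (intro total_cong_cost_nonneg)
  moreover have "0 \<le> total_per_cost A Jper h"
    unfolding total_per_cost_def using assms(5) profiles_memD[OF assms(2)] by (auto intro: sum_nonneg)
  ultimately show ?thesis unfolding social_cost_eq by simp
qed

lemma NE_social_cost_le_opt:
  assumes "finite A" "finite R"
    and "\<And>i s. i \<in> A \<Longrightarrow> s \<in> Gam i \<Longrightarrow> cg i s \<subseteq> R"
    and "\<And>r. r \<in> R \<Longrightarrow> Jr r \<in> Pd d"
    and "\<And>r x y. r \<in> R \<Longrightarrow> real y * poly (Jr r) (real x + 1)
        \<le> lam * real y * poly (Jr r) (real y) + mu * real x * poly (Jr r) (real x)"
    and alpha: "alpha_ok A Gam cg Jr Jper alpha"
    and mu: "0 \<le> mu" "mu < 1 + alpha" and lam: "1 \<le> lam"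
    and g: "g \<in> NE_set A Gam cg Jr Jper" and h: "h \<in> opt_set A Gam cg Jr Jper"
  shows "social_cost A cg Jr Jper g \<le> (lam + alpha) / (1 - mu + alpha) * social_cost A cg Jr Jper h"
proof -
  have "social_cost A cg Jr Jper g \<le> lam * total_cong_cost A cg Jr h
      + mu * total_cong_cost A cg Jr g + total_per_cost A Jper h"
    using g h unfolding NE_set_def opt_set_def
    by (intro NE_social_cost_le_smooth[OF assms(1-5)]) auto
  moreover have "0 \<le> alpha" using alpha unfolding alpha_ok_def by simp
  ultimately have "(1 - mu + alpha) * social_cost A cg Jr Jper g
      \<le> (lam + alpha) * social_cost A cg Jr Jper h"
    unfolding social_cost_eq using alpha_ok_total_cost[OF alpha] g h mu lam
    by (intro smoothness_ratio_bound) auto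
  moreover have "0 < 1 - mu + alpha" using mu by simp
  ultimately show ?thesis by (simp add: pos_le_divide_eq mult.commute)
qed

lemma PoA_le:
  assumes "finite (profiles A Gam)" "profiles A Gam \<noteq> {}" "NE_set A Gam cg Jr Jper \<noteq> {}"
    and "0 \<le> K"
    and "\<And>h. h \<in> profiles A Gam \<Longrightarrow> 0 \<le> social_cost A cg Jr Jper h"
    and "\<And>g h. g \<in> NE_set A Gam cg Jr Jper \<Longrightarrow> h \<in> opt_set A Gam cg Jr Jper \<Longrightarrow>
      social_cost A cg Jr Jper g \<le> K * social_cost A cg Jr Jper h"
  shows "PoA A Gam cg Jr Jper \<le> K"
proof -
  let ?C = "social_cost A cg Jr Jper"
  have "NE_set A Gam cg Jr Jper \<subseteq> profiles A Gam"
    unfolding NE_set_def is_NE_def by auto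
  then have "finite (NE_set A Gam cg Jr Jper)" using assms(1) by (rule finite_subset)
  then have "Max (?C ` NE_set A Gam cg Jr Jper) \<in> ?C ` NE_set A Gam cg Jr Jper"
    using assms(3) by (intro Max_in) auto
  then obtain g where g: "g \<in> NE_set A Gam cg Jr Jper" "?C g = Max (?C ` NE_set A Gam cg Jr Jper)"
    by auto
  have "Min (?C ` profiles A Gam) \<in> ?C ` profiles A Gam"
    using assms(1,2) by (intro Min_in) auto
  then obtain h where h: "h \<in> profiles A Gam" "?C h = Min (?C ` profiles A Gam)"
    by auto
  then have "h \<in> opt_set A Gam cg Jr Jper"
    unfolding opt_set_def using assms(1) by auto
  then have "?C g \<le> K * ?C h" using assms(6) g(1) by blast
  then show ?thesis
    unfolding PoA_def g(2)[symmetric] h(2)[symmetric]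
    using assms(4) assms(5)[OF h(1)] by (cases "?C h = 0") (simp_all add: divide_le_eq mult.commute)
qed

theorem lemma1:
  fixes A :: "'p set" and R :: "'r set" and Gam :: "'p \<Rightarrow> 's set"
    and cg :: "'p \<Rightarrow> 's \<Rightarrow> 'r set" and Jr :: "'r \<Rightarrow> real poly"
    and Jper :: "'p \<Rightarrow> 's \<Rightarrow> real" and d :: nat and alpha :: real
  assumes "finite A" and "finite R"
    and "\<And>i. i \<in> A \<Longrightarrow> finite (Gam i) \<and> Gam i \<noteq> {}"
    and "\<And>i s. i \<in> A \<Longrightarrow> s \<in> Gam i \<Longrightarrow> cg i s \<subseteq> R"
    and "\<And>r. r \<in> R \<Longrightarrow> Jr r \<in> Pd d"
    and "\<And>i s. i \<in> A \<Longrightarrow> s \<in> Gam i \<Longrightarrow> 0 \<le> Jper i s"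
    and "alpha_ok A Gam cg Jr Jper alpha"
    and "\<And>a. alpha_ok A Gam cg Jr Jper a \<Longrightarrow> a \<le> alpha"
  shows "\<forall>lam mu. 0 < mu \<and> mu < 1 + alpha \<and>
           (\<forall>x y :: nat. \<forall>J \<in> Pd d.
              real y * poly J (real x + 1) \<le> lam * real y * poly J (real y) + mu * real x * poly J (real x))
         \<longrightarrow> PoA A Gam cg Jr Jper \<le> (lam + alpha) / (1 - mu + alpha)"
proof (intro allI impI)
  fix lam mu
  assume "0 < mu \<and> mu < 1 + alpha \<and> (\<forall>x y :: nat. \<forall>J \<in> Pd d.
    real y * poly J (real x + 1) \<le> lam * real y * poly J (real y) + mu * real x * poly J (real x))"
  then have mu: "0 \<le> mu" "mu < 1 + alpha" and smooth: "\<And>J x y. J \<in> Pd d \<Longrightarrow>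
      real y * poly J (real x + 1) \<le> lam * real y * poly J (real y) + mu * real x * poly J (real x)"
    by auto
  have lam: "1 \<le> lam" using smooth[OF one_in_Pd, where x=0 and y=1] by simp
  have "0 \<le> alpha" using assms(7) unfolding alpha_ok_def by simp
  show "PoA A Gam cg Jr Jper \<le> (lam + alpha) / (1 - mu + alpha)"
  proof (rule PoA_le)
    show "finite (profiles A Gam)" by (rule finite_profiles) (use assms(1,3) in auto)
    show "profiles A Gam \<noteq> {}" by (rule profiles_nonempty) (use assms(3) in auto)
    show "NE_set A Gam cg Jr Jper \<noteq> {}" using assms(1-4) by (rule NE_set_nonempty)
    show "0 \<le> (lam + alpha) / (1 - mu + alpha)" using mu lam \<open>0 \<le> alpha\<close> by simp
    show "0 \<le> social_cost A cg Jr Jper h" if "h \<in> profiles A Gam" for h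
      using assms(2) that assms(4-6) by (rule social_cost_nonneg)
    show "social_cost A cg Jr Jper g
        \<le> (lam + alpha) / (1 - mu + alpha) * social_cost A cg Jr Jper h"
      if "g \<in> NE_set A Gam cg Jr Jper" "h \<in> opt_set A Gam cg Jr Jper" for g h
      using assms(1,2,4,5) smooth[OF assms(5)] assms(7) mu lam that
      by (rule NE_social_cost_le_opt)
  qed
qed

end
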